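(* Let $R$ be a discrete valuation ring with field of fractions $K$ and uniformizer $\pi$, $V$ a finite-dimensional $K$-vector space, and $L,M$ lattices of $V$. Then $\pi\cdot m_+(L,M)\subset m_-(L,M)$.
   Context: A lattice of $V$ is a free $R$-submodule $L$ with $K\otimes_R L\to V$ an isomorphism. $m_-(L,M)=\sum_{n\in\mathbb Z}(\pi^nL\cap\pi^{-n}M)$ (the $R$-submodule generated by these) and $m_+(L,M)=\bigcap_{n\in\mathbb Z}(\pi^nL+\pi^{-n}M)$. *)

theory Defs
  imports Main "HOL.Vector_Spaces"
begin

definition is_subring :: "'k::field set \<Rightarrow> bool" where
  "is_subring R \<longleftrightarrow> 0 \<in> R \<and> 1 \<in> R \<and>
     (\<forall>a\<in>R. \<forall>b\<in>R. a + b \<in> R \<and> a - b \<in> R \<and> a * b \<in> R)"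

definition is_ideal :: "'k::field set \<Rightarrow> 'k set \<Rightarrow> bool" where
  "is_ideal R I \<longleftrightarrow> I \<subseteq> R \<and> 0 \<in> I \<and> (\<forall>a\<in>I. \<forall>b\<in>I. a + b \<in> I)
     \<and> (\<forall>a\<in>I. \<forall>r\<in>R. r * a \<in> I)"

definition principal_ideal :: "'k::field set \<Rightarrow> 'k \<Rightarrow> 'k set" where
  "principal_ideal R a = {r * a | r. r \<in> R}"

definition is_prime_ideal :: "'k::field set \<Rightarrow> 'k set \<Rightarrow> bool" where
  "is_prime_ideal R P \<longleftrightarrow> is_ideal R P \<and> P \<noteq> R \<and>
     (\<forall>a\<in>R. \<forall>b\<in>R. a * b \<in> P \<longrightarrow> a \<in> P \<or> b \<in> P)"

definition is_dvr_with_fraction_field :: "'k::field set \<Rightarrow> bool" where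
  "is_dvr_with_fraction_field R \<longleftrightarrow> is_subring R
     \<and> (\<forall>I. is_ideal R I \<longrightarrow> (\<exists>a\<in>R. I = principal_ideal R a))
     \<and> (\<exists>!P. is_prime_ideal R P \<and> P \<noteq> {0})
     \<and> (\<forall>x. \<exists>a\<in>R. \<exists>b\<in>R. b \<noteq> 0 \<and> x = a / b)"

definition is_uniformizer :: "'k::field set \<Rightarrow> 'k \<Rightarrow> bool" where
  "is_uniformizer R \<pi> \<longleftrightarrow> \<pi> \<in> R \<and> \<pi> \<noteq> 0 \<and> is_prime_ideal R (principal_ideal R \<pi>)"

definition rspan :: "('k \<Rightarrow> 'v \<Rightarrow> 'v) \<Rightarrow> 'k set \<Rightarrow> 'v::ab_group_add set \<Rightarrow> 'v set" where
  "rspan scale R B = {v. \<exists>S u. finite S \<and> S \<subseteq> B \<and> (\<forall>x\<in>S. u x \<in> R)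
       \<and> v = (\<Sum>x\<in>S. scale (u x) x)}"

definition rindep :: "('k::field \<Rightarrow> 'v \<Rightarrow> 'v) \<Rightarrow> 'k set \<Rightarrow> 'v::ab_group_add set \<Rightarrow> bool" where
  "rindep scale R B \<longleftrightarrow> (\<forall>S u. finite S \<and> S \<subseteq> B \<and> (\<forall>x\<in>S. u x \<in> R)
       \<and> (\<Sum>x\<in>S. scale (u x) x) = 0 \<longrightarrow> (\<forall>x\<in>S. u x = 0))"

text \<open>A lattice: a free R-submodule L (with R-basis B) such that K \<otimes>_R L \<rightarrow> V is an
  isomorphism, i.e. the R-basis B of L is a K-basis of V.\<close>
definition is_lattice :: "('k::field \<Rightarrow> 'v \<Rightarrow> 'v) \<Rightarrow> 'k set \<Rightarrow> 'v::ab_group_add set \<Rightarrow> bool" where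
  "is_lattice scale R L \<longleftrightarrow> (\<exists>B. rindep scale R B \<and> rspan scale R B = L
       \<and> rindep scale UNIV B \<and> rspan scale UNIV B = UNIV)"

definition m_minus :: "('k::field \<Rightarrow> 'v \<Rightarrow> 'v) \<Rightarrow> 'k set \<Rightarrow> 'k \<Rightarrow> 'v::ab_group_add set \<Rightarrow> 'v set \<Rightarrow> 'v set" where
  "m_minus scale R \<pi> L M = rspan scale R
     (\<Union>n::int. (scale (\<pi> powi n) ` L) \<inter> (scale (\<pi> powi (- n)) ` M))"

definition m_plus :: "('k::field \<Rightarrow> 'v \<Rightarrow> 'v) \<Rightarrow> 'k set \<Rightarrow> 'k \<Rightarrow> 'v::ab_group_add set \<Rightarrow> 'v set \<Rightarrow> 'v set" where
  "m_plus scale R \<pi> L M = (\<Inter>n::int.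
     {a + b | a b. a \<in> scale (\<pi> powi n) ` L \<and> b \<in> scale (\<pi> powi (- n)) ` M})"

end

theory Submission
  imports Defs
begin

text \<open>Write \<open>x = a\<^sub>n + b\<^sub>n\<close> with \<open>a\<^sub>n \<in> \<pi>\<^sup>nL\<close> and \<open>b\<^sub>n \<in> \<pi>\<^sup>-\<^sup>nM\<close> for every \<open>n\<close>.
  Comparing the decompositions for \<open>n\<close> and \<open>n + 1\<close> shows that
  \<open>\<pi>a\<^sub>n - \<pi>a\<^sub>n\<^sub>+\<^sub>1 \<in> \<pi>\<^sup>nL \<inter> \<pi>\<^sup>-\<^sup>nM\<close>, so
  \<open>\<pi>x = (\<pi>a\<^sub>-\<^sub>K - \<pi>a\<^sub>K) + \<pi>a\<^sub>K + \<pi>b\<^sub>-\<^sub>K\<close> is a telescoping sum of generators of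
  \<open>m\<^sub>-(L,M)\<close> plus two boundary terms. Since \<open>L\<close> and \<open>M\<close> are commensurable
  (\<open>\<pi>\<^sup>KL \<subseteq> M\<close> and \<open>\<pi>\<^sup>KM \<subseteq> L\<close> for large \<open>K\<close>, because every element of the fraction
  field becomes integral after multiplication by a power of \<open>\<pi>\<close>), the boundary terms are
  generators too.\<close>

lemma subring_power_mem: "is_subring R \<Longrightarrow> x \<in> R \<Longrightarrow> x ^ n \<in> R"
  by (induction n) (auto simp: is_subring_def)

lemma is_ideal_principal_ideal:
  assumes "is_subring R" "a \<in> R"
  shows "is_ideal R (principal_ideal R a)"
  using assms unfolding is_ideal_def principal_ideal_def is_subring_def
  by (auto simp: distrib_right[symmetric] mult.assoc[symmetric])

lemma mem_principal_ideal_self: "is_subring R \<Longrightarrow> a \<in> principal_ideal R a"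
  unfolding principal_ideal_def is_subring_def by auto

lemma is_ideal_Union_chain:
  assumes "C \<noteq> {}" and ideals: "\<And>I. I \<in> C \<Longrightarrow> is_ideal R I" and "chain\<^sub>\<subseteq> C"
  shows "is_ideal R (\<Union>C)"
  unfolding is_ideal_def
proof (intro conjI ballI)
  show "\<Union>C \<subseteq> R"
  proof (rule Union_least)
    show "X \<subseteq> R" if "X \<in> C" for X using ideals[OF that] unfolding is_ideal_def by simp
  qed
  show "0 \<in> \<Union>C" using assms(1) ideals unfolding is_ideal_def by auto
next
  fix x y assume "x \<in> \<Union>C" "y \<in> \<Union>C"
  then obtain X Y where XY: "X \<in> C" "Y \<in> C" "x \<in> X" "y \<in> Y" by blast
  with assms(3) have "X \<subseteq> Y \<or> Y \<subseteq> X" unfolding chain_subset_def by blast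
  then obtain Z where "Z \<in> C" "x \<in> Z" "y \<in> Z" using XY by blast
  moreover from this have "x + y \<in> Z" using ideals unfolding is_ideal_def by simp
  ultimately show "x + y \<in> \<Union>C" by blast
next
  fix x r assume "x \<in> \<Union>C" "r \<in> R"
  then obtain X where "X \<in> C" "x \<in> X" by blast
  moreover from this have "r * x \<in> X" using ideals \<open>r \<in> R\<close> unfolding is_ideal_def by simp
  ultimately show "r * x \<in> \<Union>C" by blast
qed

lemma is_ideal_adjoin:
  assumes sr: "is_subring R" and I: "is_ideal R I" and x: "x \<in> R"
  shows "is_ideal R {p + r * x | p r. p \<in> I \<and> r \<in> R}"
  unfolding is_ideal_def
proof (intro conjI ballI)
  show "{p + r * x | p r. p \<in> I \<and> r \<in> R} \<subseteq> R"
    using I x sr unfolding is_ideal_def is_subring_def by blast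
  show "0 \<in> {p + r * x | p r. p \<in> I \<and> r \<in> R}"
    using I sr unfolding is_ideal_def is_subring_def by force
next
  fix a c assume "a \<in> {p + r * x | p r. p \<in> I \<and> r \<in> R}" "c \<in> {p + r * x | p r. p \<in> I \<and> r \<in> R}"
  then obtain p1 r1 p2 r2 where "a = p1 + r1 * x" "c = p2 + r2 * x" "p1 \<in> I" "p2 \<in> I" "r1 \<in> R" "r2 \<in> R"
    by blast
  moreover from this have "a + c = (p1 + p2) + (r1 + r2) * x" by (simp add: algebra_simps)
  moreover have "p1 + p2 \<in> I" "r1 + r2 \<in> R"
    using calculation I sr unfolding is_ideal_def is_subring_def by auto
  ultimately show "a + c \<in> {p + r * x | p r. p \<in> I \<and> r \<in> R}" by blast
next
  fix a t assume "a \<in> {p + r * x | p r. p \<in> I \<and> r \<in> R}" "t \<in> R"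
  then obtain p r where "a = p + r * x" "p \<in> I" "r \<in> R" by blast
  moreover from this have "t * a = t * p + (t * r) * x" by (simp add: algebra_simps)
  moreover have "t * p \<in> I" "t * r \<in> R"
    using calculation I sr \<open>t \<in> R\<close> unfolding is_ideal_def is_subring_def by auto
  ultimately show "t * a \<in> {p + r * x | p r. p \<in> I \<and> r \<in> R}" by blast
qed

lemma exists_prime_ideal_avoiding_powers:
  assumes sr: "is_subring R" and I: "is_ideal R I" and avoid: "\<forall>k. s ^ k \<notin> I"
  shows "\<exists>P. is_prime_ideal R P \<and> I \<subseteq> P \<and> (\<forall>k. s ^ k \<notin> P)"
proof -
  define A where "A = {J. is_ideal R J \<and> I \<subseteq> J \<and> (\<forall>k. s ^ k \<notin> J)}"
  have "\<forall>C\<in>chains A. \<exists>U\<in>A. \<forall>X\<in>C. X \<subseteq> U"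
  proof
    fix C assume C: "C \<in> chains A"
    show "\<exists>U\<in>A. \<forall>X\<in>C. X \<subseteq> U"
    proof (cases "C = {}")
      case True
      then show ?thesis using I avoid unfolding A_def by blast
    next
      case False
      with C have "\<Union>C \<in> A"
        using is_ideal_Union_chain[of C R] unfolding A_def chains_def by auto
      then show ?thesis by blast
    qed
  qed
  from Zorn_Lemma2[OF this] obtain P where "P \<in> A" and Pmax: "\<forall>X\<in>A. P \<subseteq> X \<longrightarrow> X = P"
    by blast
  then have P: "is_ideal R P" "I \<subseteq> P" "\<And>k. s ^ k \<notin> P" unfolding A_def by auto
  have power_in_adjoin: "\<exists>k p r. p \<in> P \<and> r \<in> R \<and> s ^ k = p + r * x" if x: "x \<in> R" "x \<notin> P" for x
  proof -
    define Q where "Q = {p + r * x | p r. p \<in> P \<and> r \<in> R}"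
    have "P \<subseteq> Q" unfolding Q_def using sr unfolding is_subring_def by force
    moreover have "x \<in> Q" unfolding Q_def using sr P(1) unfolding is_subring_def is_ideal_def by force
    moreover have "is_ideal R Q" unfolding Q_def by (rule is_ideal_adjoin[OF sr P(1) x(1)])
    ultimately have "\<exists>k. s ^ k \<in> Q" using Pmax x P(2) unfolding A_def by blast
    then show ?thesis unfolding Q_def by blast
  qed
  have "is_prime_ideal R P" unfolding is_prime_ideal_def
  proof (intro conjI ballI impI)
    show "P \<noteq> R" using P(3)[of 0] sr unfolding is_subring_def by auto
  next
    fix x y assume xy: "x \<in> R" "y \<in> R" "x * y \<in> P"
    show "x \<in> P \<or> y \<in> P"
    proof (rule ccontr)
      assume "\<not> ?thesis"
      then obtain i p1 r1 j p2 r2 where 1: "p1 \<in> P" "r1 \<in> R" "s ^ i = p1 + r1 * x"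
        and 2: "p2 \<in> P" "r2 \<in> R" "s ^ j = p2 + r2 * y"
        using power_in_adjoin xy by meson
      have "s ^ (i + j) = p2 * p1 + (r2 * y) * p1 + (r1 * x) * p2 + (r1 * r2) * (x * y)"
        by (simp add: power_add 1 2 algebra_simps)
      also have "\<dots> \<in> P"
        using P(1) 1 2 xy sr unfolding is_ideal_def is_subring_def by (meson subsetD)
      finally show False using P(3) by blast
    qed
  qed (fact P(1))
  with P show ?thesis by blast
qed

lemma dvr_uniformizer_power_multiple:
  assumes dvr: "is_dvr_with_fraction_field R" and un: "is_uniformizer R \<pi>"
    and b: "b \<in> R" "b \<noteq> 0"
  shows "\<exists>k r. r \<in> R \<and> \<pi> ^ k = r * b"
proof (rule ccontr)
  assume "\<not> ?thesis"
  then have avoid: "\<forall>k. \<pi> ^ k \<notin> principal_ideal R b" unfolding principal_ideal_def by blast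
  have sr: "is_subring R" using dvr unfolding is_dvr_with_fraction_field_def by blast
  obtain P where P: "is_prime_ideal R P" "principal_ideal R b \<subseteq> P" "\<forall>k. \<pi> ^ k \<notin> P"
    using exists_prime_ideal_avoiding_powers[OF sr is_ideal_principal_ideal[OF sr b(1)] avoid] by blast
  have "P \<noteq> {0}" using P(2) mem_principal_ideal_self[OF sr, of b] b(2) by auto
  moreover have "is_prime_ideal R (principal_ideal R \<pi>)" "principal_ideal R \<pi> \<noteq> {0}"
    using un mem_principal_ideal_self[OF sr, of \<pi>] unfolding is_uniformizer_def by auto
  ultimately have "P = principal_ideal R \<pi>"
    using dvr P(1) unfolding is_dvr_with_fraction_field_def by blast
  with P(3) show False using mem_principal_ideal_self[OF sr, of \<pi>] by (metis power_one_right)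
qed

lemma dvr_eventually_power_mult_mem:
  assumes dvr: "is_dvr_with_fraction_field R" and un: "is_uniformizer R \<pi>"
  shows "eventually (\<lambda>k. \<pi> ^ k * x \<in> R) sequentially"
proof -
  have sr: "is_subring R" using dvr unfolding is_dvr_with_fraction_field_def by blast
  have piR: "\<pi> \<in> R" using un unfolding is_uniformizer_def by blast
  obtain a b where ab: "a \<in> R" "b \<in> R" "b \<noteq> 0" "x = a / b"
    using dvr unfolding is_dvr_with_fraction_field_def by blast
  obtain k r where "r \<in> R" "\<pi> ^ k = r * b" using dvr_uniformizer_power_multiple[OF dvr un ab(2,3)] by blast
  then have "\<pi> ^ k * x = r * a" using ab by (simp add: field_simps)
  then have k: "\<pi> ^ k * x \<in> R" using \<open>r \<in> R\<close> ab sr unfolding is_subring_def by metis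
  have "\<pi> ^ j * x \<in> R" if "j \<ge> k" for j
  proof -
    have "\<pi> ^ j * x = \<pi> ^ (j - k) * (\<pi> ^ k * x)"
      using that by (simp add: mult.assoc power_add[symmetric])
    then show ?thesis using k subring_power_mem[OF sr piR] sr unfolding is_subring_def by metis
  qed
  then show ?thesis unfolding eventually_sequentially by blast
qed

lemma telescope_mem:
  fixes f :: "int \<Rightarrow> 'a::ab_group_add"
  assumes "0 \<in> N" "\<forall>x\<in>N. \<forall>y\<in>N. x + y \<in> N" "\<And>n. f n - f (n + 1) \<in> N"
  shows "f n - f (n + int j) \<in> N"
proof (induction j)
  case 0
  then show ?case using assms(1) by simp
next
  case (Suc j)
  have "n + int (Suc j) = n + int j + 1" by simp
  then have "f n - f (n + int (Suc j)) = (f n - f (n + int j)) + (f (n + int j) - f (n + int j + 1))"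
    by (simp only:) simp
  then show ?case using Suc assms(2,3) by metis
qed

definition is_rsubmodule :: "('k::field \<Rightarrow> 'v \<Rightarrow> 'v) \<Rightarrow> 'k set \<Rightarrow> 'v::ab_group_add set \<Rightarrow> bool" where
  "is_rsubmodule scale R N \<longleftrightarrow> 0 \<in> N \<and> (\<forall>x\<in>N. \<forall>y\<in>N. x + y \<in> N) \<and> (\<forall>r\<in>R. \<forall>x\<in>N. scale r x \<in> N)"

context vector_space
begin

lemma rsubmodule_diff:
  assumes "is_subring R" "is_rsubmodule scale R N" "x \<in> N" "y \<in> N"
  shows "x - y \<in> N"
proof -
  have "- 1 \<in> R" using assms(1) unfolding is_subring_def by (metis diff_0)
  then have "- y \<in> N" using assms(2,4) unfolding is_rsubmodule_def by (metis scale_minus_left scale_one)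
  then show ?thesis using assms(2,3) unfolding is_rsubmodule_def by (metis diff_conv_add_uminus)
qed

lemma rsubmodule_sum:
  assumes "is_rsubmodule scale R N" "\<forall>i\<in>F. f i \<in> N"
  shows "sum f F \<in> N"
  using assms unfolding is_rsubmodule_def
  by (induction F rule: infinite_finite_induct) auto

lemma rsubmodule_power_scale:
  assumes "is_subring R" "\<pi> \<in> R" "is_rsubmodule scale R N" "x \<in> N"
  shows "\<pi> ^ k *s x \<in> N"
  using assms subring_power_mem unfolding is_rsubmodule_def by blast

lemma is_rsubmodule_preimage_scale:
  assumes "is_rsubmodule scale R N"
  shows "is_rsubmodule scale R {v. c *s v \<in> N}"
  using assms unfolding is_rsubmodule_def
  by (simp add: scale_right_distrib) (metis mult.commute scale_scale)

lemma rspanI: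
  assumes "finite S" "S \<subseteq> B" "\<forall>x\<in>S. u x \<in> R" "v = (\<Sum>x\<in>S. u x *s x)"
  shows "v \<in> rspan scale R B"
  unfolding rspan_def using assms by blast

lemma rspan_base: "1 \<in> R \<Longrightarrow> x \<in> B \<Longrightarrow> x \<in> rspan scale R B"
  by (rule rspanI[of "{x}" B "\<lambda>_. 1"]) auto

lemma rspan_add:
  assumes sr: "is_subring R" and x: "x \<in> rspan scale R B" and y: "y \<in> rspan scale R B"
  shows "x + y \<in> rspan scale R B"
proof -
  obtain S1 u1 where 1: "finite S1" "S1 \<subseteq> B" "\<forall>v\<in>S1. u1 v \<in> R" "x = (\<Sum>v\<in>S1. u1 v *s v)"
    using x unfolding rspan_def by blast
  obtain S2 u2 where 2: "finite S2" "S2 \<subseteq> B" "\<forall>v\<in>S2. u2 v \<in> R" "y = (\<Sum>v\<in>S2. u2 v *s v)"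
    using y unfolding rspan_def by blast
  define f where "f v = (if v \<in> S1 then u1 v else 0)" for v
  define g where "g v = (if v \<in> S2 then u2 v else 0)" for v
  have "(\<Sum>v\<in>S1 \<union> S2. f v *s v) = x"
    unfolding 1(4) f_def by (rule sum.mono_neutral_cong_right) (use 1 2 in auto)
  moreover have "(\<Sum>v\<in>S1 \<union> S2. g v *s v) = y"
    unfolding 2(4) g_def by (rule sum.mono_neutral_cong_right) (use 1 2 in auto)
  ultimately have "x + y = (\<Sum>v\<in>S1 \<union> S2. (f v + g v) *s v)"
    by (simp add: scale_left_distrib sum.distrib)
  moreover have "\<forall>v\<in>S1 \<union> S2. f v + g v \<in> R"
    using 1(3) 2(3) sr unfolding f_def g_def is_subring_def by auto
  ultimately show ?thesis using 1 2 by (intro rspanI[of "S1 \<union> S2"]) auto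
qed

lemma is_rsubmodule_rspan:
  assumes "is_subring R"
  shows "is_rsubmodule scale R (rspan scale R B)"
  unfolding is_rsubmodule_def
proof (intro conjI ballI)
  show "0 \<in> rspan scale R B" by (rule rspanI[of "{}"]) auto
  show "x + y \<in> rspan scale R B" if "x \<in> rspan scale R B" "y \<in> rspan scale R B" for x y
    using rspan_add[OF assms that] .
next
  fix r x assume r: "r \<in> R" and "x \<in> rspan scale R B"
  then obtain S u where S: "finite S" "S \<subseteq> B" "\<forall>v\<in>S. u v \<in> R" "x = (\<Sum>v\<in>S. u v *s v)"
    unfolding rspan_def by blast
  have "r *s x = (\<Sum>v\<in>S. (r * u v) *s v)" by (simp add: S(4) scale_sum_right)
  moreover have "\<forall>v\<in>S. r * u v \<in> R" using S(3) r assms unfolding is_subring_def by auto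
  ultimately show "r *s x \<in> rspan scale R B" using S by (intro rspanI[of S]) auto
qed

lemma rspan_subset_rsubmodule:
  assumes "is_rsubmodule scale R N" "B \<subseteq> N"
  shows "rspan scale R B \<subseteq> N"
proof
  fix x assume "x \<in> rspan scale R B"
  then obtain S u where S: "S \<subseteq> B" "\<forall>v\<in>S. u v \<in> R" "x = (\<Sum>v\<in>S. u v *s v)"
    unfolding rspan_def by blast
  have "\<forall>v\<in>S. u v *s v \<in> N" using S assms unfolding is_rsubmodule_def by blast
  then show "x \<in> N" unfolding S(3) by (rule rsubmodule_sum[OF assms(1)])
qed

lemma lattice_is_rsubmodule:
  "is_subring R \<Longrightarrow> is_lattice scale R L \<Longrightarrow> is_rsubmodule scale R L"
  unfolding is_lattice_def using is_rsubmodule_rspan by blast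

lemma dvr_eventually_power_scale_mem_rspan:
  assumes dvr: "is_dvr_with_fraction_field R" and un: "is_uniformizer R \<pi>"
    and spans: "rspan scale UNIV B = UNIV"
  shows "eventually (\<lambda>k. \<pi> ^ k *s v \<in> rspan scale R B) sequentially"
proof -
  have "v \<in> rspan scale UNIV B" using spans by simp
  then obtain S u where S: "finite S" "S \<subseteq> B" "v = (\<Sum>x\<in>S. u x *s x)"
    unfolding rspan_def by blast
  have "eventually (\<lambda>k. \<forall>x\<in>S. \<pi> ^ k * u x \<in> R) sequentially"
    by (rule eventually_ball_finite[OF S(1)]) (simp add: dvr_eventually_power_mult_mem[OF dvr un])
  moreover have "\<pi> ^ k *s v \<in> rspan scale R B" if "\<forall>x\<in>S. \<pi> ^ k * u x \<in> R" for k
  proof (rule rspanI[OF S(1,2) that])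
    show "\<pi> ^ k *s v = (\<Sum>x\<in>S. (\<pi> ^ k * u x) *s x)" by (simp add: S(3) scale_sum_right)
  qed
  ultimately show ?thesis by (rule eventually_mono)
qed

lemma dvr_eventually_power_scale_lattice_subset:
  assumes fd: "finite_dimensional_vector_space scale Bf"
    and dvr: "is_dvr_with_fraction_field R" and un: "is_uniformizer R \<pi>"
    and L: "is_lattice scale R L" and M: "is_lattice scale R M"
  shows "eventually (\<lambda>k. \<forall>l\<in>L. \<pi> ^ k *s l \<in> M) sequentially"
proof -
  have sr: "is_subring R" using dvr unfolding is_dvr_with_fraction_field_def by blast
  obtain BL where BL: "rspan scale R BL = L" "rindep scale UNIV BL"
    using L unfolding is_lattice_def by blast
  obtain BM where BM: "rspan scale R BM = M" "rspan scale UNIV BM = UNIV"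
    using M unfolding is_lattice_def by blast
  have "independent BL"
    using BL(2) unfolding independent_explicit_finite_subsets rindep_def by blast
  then have "finite BL" using finite_dimensional_vector_space.finiteI_independent[OF fd] by blast
  then have "eventually (\<lambda>k. \<forall>x\<in>BL. \<pi> ^ k *s x \<in> M) sequentially"
    by (rule eventually_ball_finite)
      (simp add: dvr_eventually_power_scale_mem_rspan[OF dvr un BM(2), unfolded BM(1)])
  moreover have "\<forall>l\<in>L. \<pi> ^ k *s l \<in> M" if "\<forall>x\<in>BL. \<pi> ^ k *s x \<in> M" for k
  proof -
    have "L \<subseteq> {l. \<pi> ^ k *s l \<in> M}"
      unfolding BL(1)[symmetric] using that
      by (intro rspan_subset_rsubmodule is_rsubmodule_preimage_scale lattice_is_rsubmodule[OF sr M]) auto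
    then show ?thesis by blast
  qed
  ultimately show ?thesis by (rule eventually_mono)
qed

lemma m_minus_generator:
  assumes "is_subring R" "u \<in> scale (\<pi> powi n) ` L" "u \<in> scale (\<pi> powi (- n)) ` M"
  shows "u \<in> m_minus scale R \<pi> L M"
  unfolding m_minus_def using assms by (intro rspan_base) (auto simp: is_subring_def)

lemma m_minus_commute: "m_minus scale R \<pi> L M = m_minus scale R \<pi> M L"
proof -
  have reindex: "(\<Union>n::int. S n) = (\<Union>n. S (- n))" for S :: "int \<Rightarrow> 'b set"
    by (metis (no_types) image_image surj_def minus_minus)
  have "(\<Union>n::int. scale (\<pi> powi n) ` L \<inter> scale (\<pi> powi (- n)) ` M)
      = (\<Union>n::int. scale (\<pi> powi (- n)) ` L \<inter> scale (\<pi> powi (- (- n))) ` M)"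
    by (rule reindex)
  also have "\<dots> = (\<Union>n::int. scale (\<pi> powi n) ` M \<inter> scale (\<pi> powi (- n)) ` L)"
    by (simp only: minus_minus Int_commute)
  finally show ?thesis unfolding m_minus_def by simp
qed

lemma is_rsubmodule_m_minus:
  "is_subring R \<Longrightarrow> is_rsubmodule scale R (m_minus scale R \<pi> L M)"
  unfolding m_minus_def by (rule is_rsubmodule_rspan)

lemma scale_diff_mem_m_minus:
  assumes sr: "is_subring R" and piR: "\<pi> \<in> R" and pi0: "\<pi> \<noteq> 0"
    and L: "is_rsubmodule scale R L" and M: "is_rsubmodule scale R M"
    and l: "l \<in> L" "l' \<in> L" and m: "m \<in> M" "m' \<in> M"
    and eq: "(\<pi> powi n) *s l + (\<pi> powi (- n)) *s m
      = (\<pi> powi (n + 1)) *s l' + (\<pi> powi (- (n + 1))) *s m'"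
  shows "\<pi> *s ((\<pi> powi n) *s l) - \<pi> *s ((\<pi> powi (n + 1)) *s l') \<in> m_minus scale R \<pi> L M"
proof (rule m_minus_generator[OF sr])
  have up: "\<pi> powi (n + 1) = \<pi> powi n * \<pi>" using pi0 by (simp add: power_int_add_1)
  have "\<pi> *s ((\<pi> powi n) *s l) - \<pi> *s ((\<pi> powi (n + 1)) *s l')
      = (\<pi> powi n) *s (\<pi> *s l - \<pi> *s (\<pi> *s l'))"
    unfolding up by (simp add: scale_right_diff_distrib mult.commute mult.left_commute)
  moreover have "\<pi> *s l - \<pi> *s (\<pi> *s l') \<in> L"
    using L l piR rsubmodule_diff[OF sr L] unfolding is_rsubmodule_def by blast
  ultimately show "\<pi> *s ((\<pi> powi n) *s l) - \<pi> *s ((\<pi> powi (n + 1)) *s l') \<in> scale (\<pi> powi n) ` L"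
    by blast
  have down: "\<pi> powi (- n) = \<pi> powi (- (n + 1)) * \<pi>"
    using pi0 power_int_add_1[of \<pi> "- (n + 1)"] by simp
  have "(\<pi> powi n) *s l - (\<pi> powi (n + 1)) *s l' = (\<pi> powi (- (n + 1))) *s m' - (\<pi> powi (- n)) *s m"
    using eq by (metis add_diff_cancel_left' diff_diff_eq2 eq_diff_eq)
  then have "\<pi> *s ((\<pi> powi n) *s l) - \<pi> *s ((\<pi> powi (n + 1)) *s l')
      = \<pi> *s ((\<pi> powi (- (n + 1))) *s m' - (\<pi> powi (- n)) *s m)"
    by (metis scale_right_diff_distrib)
  also have "\<dots> = (\<pi> powi (- n)) *s (m' - \<pi> *s m)"
    unfolding down by (simp add: scale_right_diff_distrib mult.commute mult.left_commute)
  finally show "\<pi> *s ((\<pi> powi n) *s l) - \<pi> *s ((\<pi> powi (n + 1)) *s l') \<in> scale (\<pi> powi (- n)) ` M"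
    using M m piR rsubmodule_diff[OF sr M] unfolding is_rsubmodule_def by blast
qed

text \<open>The boundary term: \<open>\<pi>\<^sup>K\<pi>l = \<pi>\<^sup>-\<^sup>K(\<pi>\<^sup>K\<^sup>+\<^sup>1(\<pi>\<^sup>Kl))\<close> with \<open>\<pi>\<^sup>Kl \<in> M\<close>.\<close>
lemma scale_power_scale_mem_m_minus:
  assumes sr: "is_subring R" and piR: "\<pi> \<in> R" and pi0: "\<pi> \<noteq> 0"
    and L: "is_rsubmodule scale R L" and M: "is_rsubmodule scale R M"
    and bound: "\<forall>l\<in>L. \<pi> ^ K *s l \<in> M" and l: "l \<in> L"
  shows "\<pi> *s (\<pi> ^ K *s l) \<in> m_minus scale R \<pi> L M"
proof (rule m_minus_generator[OF sr, where n = "int K"])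
  have "\<pi> *s (\<pi> ^ K *s l) = \<pi> ^ K *s (\<pi> *s l)" by (simp add: mult.commute)
  moreover have "\<pi> *s l \<in> L" using L l piR unfolding is_rsubmodule_def by blast
  ultimately show "\<pi> *s (\<pi> ^ K *s l) \<in> scale (\<pi> powi int K) ` L"
    unfolding power_int_of_nat by (metis imageI)
  have "\<pi> *s (\<pi> ^ K *s l) = inverse (\<pi> ^ K) *s (\<pi> ^ (K + 1) *s (\<pi> ^ K *s l))"
    using pi0 by (simp add: field_simps)
  moreover have "\<pi> ^ (K + 1) *s (\<pi> ^ K *s l) \<in> M"
    using rsubmodule_power_scale[OF sr piR M] bound l by blast
  ultimately show "\<pi> *s (\<pi> ^ K *s l) \<in> scale (\<pi> powi (- int K)) ` M"
    unfolding power_int_minus power_int_of_nat by (metis imageI)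
qed

lemma scale_m_plus_subset_m_minus:
  assumes sr: "is_subring R" and piR: "\<pi> \<in> R" and pi0: "\<pi> \<noteq> 0"
    and L: "is_rsubmodule scale R L" and M: "is_rsubmodule scale R M"
    and bound_LM: "\<forall>l\<in>L. \<pi> ^ K *s l \<in> M" and bound_ML: "\<forall>m\<in>M. \<pi> ^ K *s m \<in> L"
  shows "scale \<pi> ` m_plus scale R \<pi> L M \<subseteq> m_minus scale R \<pi> L M"
proof
  fix y assume "y \<in> scale \<pi> ` m_plus scale R \<pi> L M"
  then obtain x where y: "y = \<pi> *s x" and "x \<in> m_plus scale R \<pi> L M" by blast
  then have "\<forall>n. \<exists>l m. l \<in> L \<and> m \<in> M \<and> x = (\<pi> powi n) *s l + (\<pi> powi (- n)) *s m"
    unfolding m_plus_def by blast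
  then obtain l m where lm: "\<And>n. l n \<in> L" "\<And>n. m n \<in> M"
    and x: "\<And>n. x = (\<pi> powi n) *s l n + (\<pi> powi (- n)) *s m n"
    by metis
  define a where "a n = \<pi> *s ((\<pi> powi n) *s l n)" for n
  note m_minus = is_rsubmodule_m_minus[OF sr, of \<pi> L M, unfolded is_rsubmodule_def]
  have "a n - a (n + 1) \<in> m_minus scale R \<pi> L M" for n
    unfolding a_def using trans[OF x[of n, symmetric] x[of "n + 1"]] lm
    by (intro scale_diff_mem_m_minus[OF sr piR pi0 L M])
  then have "a (- int K) - a (- int K + int (2 * K)) \<in> m_minus scale R \<pi> L M"
    using m_minus by (intro telescope_mem) auto
  moreover have "a (int K) \<in> m_minus scale R \<pi> L M"
    unfolding a_def power_int_of_nat using scale_power_scale_mem_m_minus[OF sr piR pi0 L M bound_LM lm(1)] .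
  moreover have "\<pi> *s ((\<pi> powi (- (- int K))) *s m (- int K)) \<in> m_minus scale R \<pi> L M"
    unfolding minus_minus power_int_of_nat m_minus_commute[of R \<pi> L]
    using scale_power_scale_mem_m_minus[OF sr piR pi0 M L bound_ML lm(2)] .
  moreover have "y = (a (- int K) - a (- int K + int (2 * K))) + a (int K)
      + \<pi> *s ((\<pi> powi (- (- int K))) *s m (- int K))"
    unfolding y a_def x[of "- int K"] by (simp add: scale_right_distrib)
  ultimately show "y \<in> m_minus scale R \<pi> L M" using m_minus by metis
qed

end

theorem theorem1p2p4:
  fixes scale :: "'k::field \<Rightarrow> 'v::ab_group_add \<Rightarrow> 'v"
    and R :: "'k set" and \<pi> :: 'k and L M :: "'v set"
  assumes "vector_space scale"
    and "\<exists>B. finite_dimensional_vector_space scale B"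
    and "is_dvr_with_fraction_field R"
    and "is_uniformizer R \<pi>"
    and "is_lattice scale R L"
    and "is_lattice scale R M"
  shows "scale \<pi> ` m_plus scale R \<pi> L M \<subseteq> m_minus scale R \<pi> L M"
proof -
  interpret vector_space scale by fact
  obtain B where fd: "finite_dimensional_vector_space scale B" using assms(2) by blast
  have sr: "is_subring R" using assms(3) unfolding is_dvr_with_fraction_field_def by blast
  have piR: "\<pi> \<in> R" and pi0: "\<pi> \<noteq> 0" using assms(4) unfolding is_uniformizer_def by auto
  have "eventually (\<lambda>k. (\<forall>l\<in>L. scale (\<pi> ^ k) l \<in> M) \<and> (\<forall>m\<in>M. scale (\<pi> ^ k) m \<in> L)) sequentially"
    by (intro eventually_conj dvr_eventually_power_scale_lattice_subset[OF fd assms(3,4)] assms(5,6))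
  then obtain K where "\<forall>l\<in>L. scale (\<pi> ^ K) l \<in> M" "\<forall>m\<in>M. scale (\<pi> ^ K) m \<in> L"
    unfolding eventually_sequentially by blast
  then show ?thesis
    using lattice_is_rsubmodule[OF sr] assms(5,6) by (intro scale_m_plus_subset_m_minus[OF sr piR pi0])
qed

end
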